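(* Let $k$ be a field and $Q$ a finitely generated commutative monoid. If $I_\ell\supsetneq\cdots\supsetneq I_0$ is a chain of distinct binomial ideals of $k[Q]$ all inducing the same congruence on $Q$, then $\ell\le1$. Moreover, if $\ell=1$ then $I_1$ contains monomials, $I_0$ contains none, and $I_0=I_1\cap\mathfrak a$ for some augmentation ideal $\mathfrak a$ compatible with $I_1$.
   Context: $k[Q]=\bigoplus_{q\in Q}k\,t^q$ with $t^pt^q=t^{p+q}$. A \emph{binomial ideal} is an ideal generated by elements $t^p-\lambda t^q$ with $\lambda\in k$ ($\lambda=0$ allowed). A binomial ideal $I$ \emph{induces} the congruence $\sim_I$ on $Q$: $p\sim_I q$ iff $t^p-\lambda t^q\in I$ for some $\lambda\in k^*$. An \emph{augmentation ideal compatible with} a binomial ideal $I$ is a proper ideal of the form $\mathfrak a=\langle t^q-\lambda_q: q\in Q\rangle$ with all $\lambda_q\in k^*$ such that $I\cap\mathfrak a$ is a binomial ideal. *)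

theory Defs
  imports "HOL-Library.Poly_Mapping"
begin

text \<open>The monoid algebra k[Q] is modelled as the type of finitely supported functions
  'q =>0 'k, with the commutative monoid Q written additively ('q::comm_monoid_add).
  The product of poly_mapping is convolution, so Poly_Mapping.single q 1 is the monomial t^q.\<close>

abbreviation mono_t :: "'q::comm_monoid_add \<Rightarrow> ('q \<Rightarrow>\<^sub>0 'k::field)" where
  "mono_t q \<equiv> Poly_Mapping.single q 1"

inductive_set monoid_span :: "'q::comm_monoid_add set \<Rightarrow> 'q set" for G where
  span_zero: "0 \<in> monoid_span G"
| span_gen: "g \<in> G \<Longrightarrow> g \<in> monoid_span G"
| span_add: "a \<in> monoid_span G \<Longrightarrow> b \<in> monoid_span G \<Longrightarrow> a + b \<in> monoid_span G"

definition finitely_generated_monoid :: "'q::comm_monoid_add itself \<Rightarrow> bool" where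
  "finitely_generated_monoid _ \<longleftrightarrow> (\<exists>G::'q set. finite G \<and> monoid_span G = UNIV)"

definition is_ideal :: "'a::comm_ring_1 set \<Rightarrow> bool" where
  "is_ideal I \<longleftrightarrow> 0 \<in> I \<and> (\<forall>a\<in>I. \<forall>b\<in>I. a + b \<in> I) \<and> (\<forall>r a. a \<in> I \<longrightarrow> r * a \<in> I)"

definition ideal_gen :: "'a::comm_ring_1 set \<Rightarrow> 'a set" where
  "ideal_gen S = \<Inter>{I. is_ideal I \<and> S \<subseteq> I}"

definition binomials :: "('q::comm_monoid_add \<Rightarrow>\<^sub>0 'k::field) set" where
  "binomials = {mono_t p - Poly_Mapping.single q c | p q c. True}"

definition binomial_ideal :: "('q::comm_monoid_add \<Rightarrow>\<^sub>0 'k::field) set \<Rightarrow> bool" where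
  "binomial_ideal I \<longleftrightarrow> (\<exists>B. B \<subseteq> binomials \<and> I = ideal_gen B)"

definition induced_cong :: "('q::comm_monoid_add \<Rightarrow>\<^sub>0 'k::field) set \<Rightarrow> 'q \<Rightarrow> 'q \<Rightarrow> bool" where
  "induced_cong I p q \<longleftrightarrow> (\<exists>c::'k. c \<noteq> 0 \<and> mono_t p - Poly_Mapping.single q c \<in> I)"

definition augmentation_compatible ::
  "('q::comm_monoid_add \<Rightarrow>\<^sub>0 'k::field) set \<Rightarrow> ('q \<Rightarrow>\<^sub>0 'k) set \<Rightarrow> bool" where
  "augmentation_compatible I A \<longleftrightarrow>
     (\<exists>c::'q \<Rightarrow> 'k. (\<forall>q. c q \<noteq> 0) \<and>
        A = ideal_gen (range (\<lambda>q. mono_t q - Poly_Mapping.single 0 (c q)))) \<and>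
     A \<noteq> UNIV \<and> binomial_ideal (I \<inter> A)"

end

theory Submission
  imports Defs
begin

(* The heart of the argument is a reduction fact: if I \<subseteq> J are binomial ideals
   inducing the same congruence, every binomial of J agrees modulo I with a
   scalar multiple of a monomial lying in J.  Consequently J is contained in any
   ideal S \<supseteq> I that contains the monomials of J.  Two consequences follow:
   - rigidity: if I \<subset> J strictly, then J contains a monomial and I contains none
     (a monomial of I would force all monomials of J into I, and then J \<subseteq> I);
     in a chain I_0 \<subset> I_1 \<subset> I_2 the middle ideal would have to both contain and
     avoid monomials, so the chain has length at most one;
   - for a jump I_0 \<subset> I_1 with t^m \<in> I_1, every t^(q+m) is congruent modulo I_0 to a
     unique nonzero multiple \<phi>(q) t^m; the augmentation ideal
     A = \<langle>t^q - \<phi>(q)\<rangle> annihilates t^m modulo I_0, contains I_0, and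
     I_1 \<subseteq> I_0 + k t^m (by the containment criterion above) gives I_1 \<inter> A = I_0.
   The argument never uses that Q is finitely generated. *)

lemma is_ideal_ideal_gen: "is_ideal (ideal_gen S)"
  unfolding ideal_gen_def is_ideal_def by auto

lemma ideal_gen_subset: "S \<subseteq> ideal_gen S"
  unfolding ideal_gen_def by auto

lemma ideal_gen_least: "is_ideal J \<Longrightarrow> S \<subseteq> J \<Longrightarrow> ideal_gen S \<subseteq> J"
  unfolding ideal_gen_def by auto

lemma ideal_zero: "is_ideal I \<Longrightarrow> 0 \<in> I"
  unfolding is_ideal_def by auto

lemma ideal_add: "is_ideal I \<Longrightarrow> a \<in> I \<Longrightarrow> b \<in> I \<Longrightarrow> a + b \<in> I"
  unfolding is_ideal_def by auto

lemma ideal_mult: "is_ideal I \<Longrightarrow> a \<in> I \<Longrightarrow> r * a \<in> I"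
  unfolding is_ideal_def by auto

lemma ideal_diff: "is_ideal (I::'a::comm_ring_1 set) \<Longrightarrow> a \<in> I \<Longrightarrow> b \<in> I \<Longrightarrow> a - b \<in> I"
  using ideal_add[of I a "(-1) * b"] ideal_mult[of I b "-1"] by simp

lemma poly_mapping_term_induct:
  assumes "P 0" and "\<And>f q c. P f \<Longrightarrow> P (Poly_Mapping.single q c + f)"
  shows "P f"
proof (induction f rule: update_induct)
  case const
  then show ?case using assms by simp
next
  case (update f a b)
  have "Poly_Mapping.update a b f = Poly_Mapping.single a b + f"
    using update(1)
    by (intro poly_mapping_eqI)
       (auto simp: Poly_Mapping.lookup_update lookup_add lookup_single in_keys_iff when_def)
  then show ?case using assms update by simp
qed

(* In a monoid algebra, an additive subgroup is an ideal as soon as it is stable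
   under multiplication by single terms; this avoids multiplying by general elements. *)
lemma is_idealI_terms:
  fixes S :: "('q::comm_monoid_add \<Rightarrow>\<^sub>0 'k::comm_ring_1) set"
  assumes zero: "0 \<in> S" and add: "\<And>a b. a \<in> S \<Longrightarrow> b \<in> S \<Longrightarrow> a + b \<in> S"
    and term_mult: "\<And>q c a. a \<in> S \<Longrightarrow> Poly_Mapping.single q c * a \<in> S"
  shows "is_ideal S"
proof -
  have "r * a \<in> S" if "a \<in> S" for r a
  proof (induction r rule: poly_mapping_term_induct)
    case 1
    show ?case using zero by simp
  next
    case (2 f q c)
    then show ?case using add term_mult that by (simp add: distrib_right)
  qed
  then show ?thesis using zero add unfolding is_ideal_def by blast
qed

lemma single_in_ideal_iff:
  fixes I :: "('q::comm_monoid_add \<Rightarrow>\<^sub>0 'k::field) set"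
  assumes "is_ideal I" and "c \<noteq> 0"
  shows "Poly_Mapping.single q c \<in> I \<longleftrightarrow> mono_t q \<in> I"
proof
  assume "Poly_Mapping.single q c \<in> I"
  then have "Poly_Mapping.single 0 (inverse c) * Poly_Mapping.single q c \<in> I"
    using assms(1) ideal_mult by blast
  then show "mono_t q \<in> I" using assms(2) by (simp add: mult_single)
next
  assume "mono_t q \<in> I"
  then have "Poly_Mapping.single 0 c * mono_t q \<in> I"
    using assms(1) ideal_mult by blast
  then show "Poly_Mapping.single q c \<in> I" by (simp add: mult_single)
qed

lemma binomial_ideal_is_ideal: "binomial_ideal I \<Longrightarrow> is_ideal I"
  unfolding binomial_ideal_def using is_ideal_ideal_gen by auto

lemma binomial_ideal_subsetI:
  fixes J :: "('q::comm_monoid_add \<Rightarrow>\<^sub>0 'k::field) set"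
  assumes "binomial_ideal J" and "is_ideal S"
    and "\<And>p q c. mono_t p - Poly_Mapping.single q c \<in> J \<Longrightarrow> mono_t p - Poly_Mapping.single q c \<in> S"
  shows "J \<subseteq> S"
proof -
  obtain B where B: "B \<subseteq> binomials" "J = ideal_gen B"
    using assms(1) unfolding binomial_ideal_def by blast
  have "B \<subseteq> S"
  proof
    fix b assume "b \<in> B"
    moreover from this obtain p q c where "b = mono_t p - Poly_Mapping.single q c"
      using B(1) unfolding binomials_def by blast
    ultimately show "b \<in> S" using assms(3) B(2) ideal_gen_subset by blast
  qed
  then show ?thesis using B(2) ideal_gen_least[OF assms(2)] by blast
qed

lemma induced_cong_monomials:
  fixes J :: "('q::comm_monoid_add \<Rightarrow>\<^sub>0 'k::field) set"
  assumes "is_ideal J" and "mono_t p \<in> J" and "mono_t q \<in> J"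
  shows "induced_cong J p q"
  unfolding induced_cong_def using ideal_diff[OF assms] by (intro exI[of _ 1]) simp

lemma binomial_reduction:
  fixes I J :: "('q::comm_monoid_add \<Rightarrow>\<^sub>0 'k::field) set"
  assumes I: "is_ideal I" and J: "is_ideal J" and sub: "I \<subseteq> J"
    and cong: "induced_cong I = induced_cong J"
    and b: "mono_t p - Poly_Mapping.single q c \<in> J"
  shows "\<exists>r e. Poly_Mapping.single r e \<in> J \<and>
           mono_t p - Poly_Mapping.single q c - Poly_Mapping.single r e \<in> I"
proof (cases "c = 0")
  case True
  then show ?thesis using b ideal_zero[OF I] by (intro exI[of _ p] exI[of _ 1]) simp
next
  case False
  then have "induced_cong J p q" using b unfolding induced_cong_def by blast
  then obtain d where d: "mono_t p - Poly_Mapping.single q d \<in> I"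
    using cong unfolding induced_cong_def by metis
  have eq: "mono_t p - Poly_Mapping.single q c - Poly_Mapping.single q (d - c)
      = mono_t p - Poly_Mapping.single q d"
    by (simp add: single_diff)
  have "(mono_t p - Poly_Mapping.single q c) - (mono_t p - Poly_Mapping.single q d) \<in> J"
    using b d sub ideal_diff[OF J] by blast
  then have "Poly_Mapping.single q (d - c) \<in> J" by (simp add: single_diff)
  then show ?thesis using d eq by metis
qed

lemma binomial_ideal_subset_cover:
  fixes I J S :: "('q::comm_monoid_add \<Rightarrow>\<^sub>0 'k::field) set"
  assumes bI: "binomial_ideal I" and bJ: "binomial_ideal J" and sub: "I \<subseteq> J"
    and cong: "induced_cong I = induced_cong J"
    and S: "is_ideal S" and IS: "I \<subseteq> S" and monomials_J: "\<And>q. mono_t q \<in> J \<Longrightarrow> mono_t q \<in> S"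
  shows "J \<subseteq> S"
proof (rule binomial_ideal_subsetI[OF bJ S])
  fix p q c
  assume "mono_t p - Poly_Mapping.single q c \<in> J"
  then obtain r e where re: "Poly_Mapping.single r e \<in> J"
      "mono_t p - Poly_Mapping.single q c - Poly_Mapping.single r e \<in> I"
    using binomial_reduction[OF _ _ sub cong] bI bJ binomial_ideal_is_ideal by blast
  have "Poly_Mapping.single r e \<in> S"
  proof (cases "e = 0")
    case True
    then show ?thesis using ideal_zero[OF S] by simp
  next
    case False
    then have "mono_t r \<in> J"
      using re(1) single_in_ideal_iff[OF binomial_ideal_is_ideal[OF bJ]] by blast
    then show ?thesis using False monomials_J single_in_ideal_iff[OF S] by blast
  qed
  then have "(mono_t p - Poly_Mapping.single q c - Poly_Mapping.single r e)
      + Poly_Mapping.single r e \<in> S"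
    using re(2) IS ideal_add[OF S] by blast
  then show "mono_t p - Poly_Mapping.single q c \<in> S" by simp
qed

lemma monomials_transfer:
  fixes I J :: "('q::comm_monoid_add \<Rightarrow>\<^sub>0 'k::field) set"
  assumes I: "is_ideal I" and J: "is_ideal J" and sub: "I \<subseteq> J"
    and cong: "induced_cong I = induced_cong J"
    and m: "mono_t m \<in> I" and q: "mono_t q \<in> J"
  shows "mono_t q \<in> I"
proof -
  have "induced_cong J q m" using induced_cong_monomials[OF J q] m sub by blast
  then obtain c where "c \<noteq> 0" and c: "mono_t q - Poly_Mapping.single m c \<in> I"
    using cong unfolding induced_cong_def by metis
  then have "Poly_Mapping.single m c \<in> I" using single_in_ideal_iff[OF I] m by blast
  then have "(mono_t q - Poly_Mapping.single m c) + Poly_Mapping.single m c \<in> I"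
    using c ideal_add[OF I] by blast
  then show ?thesis by simp
qed

lemma strict_binomial_inclusion:
  fixes I J :: "('q::comm_monoid_add \<Rightarrow>\<^sub>0 'k::field) set"
  assumes bI: "binomial_ideal I" and bJ: "binomial_ideal J" and strict: "I \<subset> J"
    and cong: "induced_cong I = induced_cong J"
  shows "(\<exists>q. mono_t q \<in> J) \<and> (\<forall>q. mono_t q \<notin> I)"
proof -
  have I: "is_ideal I" and J: "is_ideal J" and sub: "I \<subseteq> J"
    using bI bJ strict binomial_ideal_is_ideal by auto
  have "\<not> (\<forall>q. mono_t q \<in> J \<longrightarrow> mono_t q \<in> I)"
    using binomial_ideal_subset_cover[OF bI bJ sub cong I] strict by blast
  moreover have "\<forall>q. mono_t q \<in> J \<longrightarrow> mono_t q \<in> I" if "mono_t m \<in> I" for m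
    using monomials_transfer[OF I J sub cong that] by blast
  ultimately show ?thesis by blast
qed

locale monomial_jump =
  fixes I0 I1 :: "('q::comm_monoid_add \<Rightarrow>\<^sub>0 'k::field) set" and m :: 'q
  assumes binomial0: "binomial_ideal I0" and binomial1: "binomial_ideal I1"
    and subset: "I0 \<subseteq> I1" and cong: "induced_cong I0 = induced_cong I1"
    and mono_m: "mono_t m \<in> I1" and no_monomials: "\<forall>q. mono_t q \<notin> I0"
begin

lemma ideal0: "is_ideal I0" and ideal1: "is_ideal I1"
  using binomial0 binomial1 binomial_ideal_is_ideal by auto

lemma single_in_I0: "Poly_Mapping.single q c \<in> I0 \<Longrightarrow> c = 0"
  using single_in_ideal_iff[OF ideal0] no_monomials by blast

lemma monomial_residue:
  assumes "mono_t q \<in> I1"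
  shows "\<exists>c. c \<noteq> 0 \<and> mono_t q - Poly_Mapping.single m c \<in> I0"
  using induced_cong_monomials[OF ideal1 assms mono_m] cong unfolding induced_cong_def by metis

definition residue :: "'q \<Rightarrow> 'k" where
  "residue q = (SOME c. c \<noteq> 0 \<and> mono_t (q + m) - Poly_Mapping.single m c \<in> I0)"

lemma residue: "residue q \<noteq> 0 \<and> mono_t (q + m) - Poly_Mapping.single m (residue q) \<in> I0"
proof -
  have "mono_t q * mono_t m \<in> I1" using mono_m ideal_mult[OF ideal1] by blast
  then have "mono_t (q + m) \<in> I1" by (simp add: mult_single)
  from monomial_residue[OF this] show ?thesis unfolding residue_def by (rule someI_ex)
qed

definition aug :: "('q \<Rightarrow>\<^sub>0 'k) set" where
  "aug = ideal_gen (range (\<lambda>q. mono_t q - Poly_Mapping.single 0 (residue q)))"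

lemma is_ideal_aug: "is_ideal aug"
  unfolding aug_def by (rule is_ideal_ideal_gen)

lemma aug_generator: "mono_t q - Poly_Mapping.single 0 (residue q) \<in> aug"
  unfolding aug_def by (rule subsetD[OF ideal_gen_subset]) auto

lemma aug_colon: "aug \<subseteq> {f. f * mono_t m \<in> I0}"
  unfolding aug_def
proof (rule ideal_gen_least)
  show "is_ideal {f. f * mono_t m \<in> I0}"
    unfolding is_ideal_def using ideal0 ideal_zero ideal_add ideal_mult
    by (auto simp: distrib_right mult.assoc)
  have "(mono_t q - Poly_Mapping.single 0 (residue q)) * mono_t m
      = mono_t (q + m) - Poly_Mapping.single m (residue q)" for q
    by (simp add: left_diff_distrib mult_single)
  then show "range (\<lambda>q. mono_t q - Poly_Mapping.single 0 (residue q)) \<subseteq> {f. f * mono_t m \<in> I0}"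
    using residue by auto
qed

lemma aug_proper: "aug \<noteq> UNIV"
proof
  assume "aug = UNIV"
  then have "1 * mono_t m \<in> I0" using aug_colon by blast
  then show False using no_monomials by simp
qed

(* For a binomial t^p - c t^q of I0, multiplying by t^m shows \<phi>(p) = c \<phi>(q),
   so the binomial is the combination (t^p - \<phi>(p)) - c (t^q - \<phi>(q)). *)
lemma I0_subset_aug: "I0 \<subseteq> aug"
proof (rule binomial_ideal_subsetI[OF binomial0 is_ideal_aug])
  fix p q :: 'q and c :: 'k
  let ?b = "mono_t p - Poly_Mapping.single q c"
  assume b: "?b \<in> I0"
  have "(mono_t (p + m) - Poly_Mapping.single m (residue p)) - ?b * mono_t m
      - Poly_Mapping.single 0 c * (mono_t (q + m) - Poly_Mapping.single m (residue q)) \<in> I0"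
    using b residue ideal0 ideal_diff ideal_mult by (metis mult.commute)
  moreover have "(mono_t (p + m) - Poly_Mapping.single m (residue p)) - ?b * mono_t m
      - Poly_Mapping.single 0 c * (mono_t (q + m) - Poly_Mapping.single m (residue q))
      = Poly_Mapping.single m (c * residue q - residue p)"
    by (simp add: left_diff_distrib right_diff_distrib mult_single single_diff)
  ultimately have e: "residue p = c * residue q" using single_in_I0 by fastforce
  have "?b = (mono_t p - Poly_Mapping.single 0 (residue p))
      - Poly_Mapping.single 0 c * (mono_t q - Poly_Mapping.single 0 (residue q))"
    unfolding e by (simp add: right_diff_distrib mult_single)
  then show "?b \<in> aug" using aug_generator is_ideal_aug ideal_diff ideal_mult by metis
qed

definition near :: "('q \<Rightarrow>\<^sub>0 'k) set" where
  "near = {f. \<exists>a. f - Poly_Mapping.single m a \<in> I0}"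

lemma is_ideal_near: "is_ideal near"
proof (rule is_idealI_terms)
  show "0 \<in> near" unfolding near_def using ideal_zero[OF ideal0] by (intro CollectI exI[of _ 0]) simp
next
  fix a b assume "a \<in> near" "b \<in> near"
  then obtain x y where "a - Poly_Mapping.single m x \<in> I0" "b - Poly_Mapping.single m y \<in> I0"
    unfolding near_def by blast
  then have "(a - Poly_Mapping.single m x) + (b - Poly_Mapping.single m y) \<in> I0"
    using ideal_add[OF ideal0] by blast
  then show "a + b \<in> near" unfolding near_def
    by (intro CollectI exI[of _ "x + y"]) (simp add: single_add algebra_simps)
next
  fix q c a assume "a \<in> near"
  then obtain x where x: "a - Poly_Mapping.single m x \<in> I0" unfolding near_def by blast
  have "Poly_Mapping.single q c * (a - Poly_Mapping.single m x)
      + Poly_Mapping.single 0 (c * x) * (mono_t (q + m) - Poly_Mapping.single m (residue q)) \<in> I0"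
    using x residue ideal_add[OF ideal0] ideal_mult[OF ideal0] by blast
  moreover have "Poly_Mapping.single q c * (a - Poly_Mapping.single m x)
      + Poly_Mapping.single 0 (c * x) * (mono_t (q + m) - Poly_Mapping.single m (residue q))
      = Poly_Mapping.single q c * a - Poly_Mapping.single m (c * x * residue q)"
    by (simp add: right_diff_distrib mult_single)
  ultimately show "Poly_Mapping.single q c * a \<in> near" unfolding near_def by auto
qed

lemma I1_subset_near: "I1 \<subseteq> near"
proof (rule binomial_ideal_subset_cover[OF binomial0 binomial1 subset cong is_ideal_near])
  show "I0 \<subseteq> near" unfolding near_def by (force intro: exI[of _ 0])
  show "mono_t q \<in> near" if "mono_t q \<in> I1" for q
    using monomial_residue[OF that] unfolding near_def by blast
qed

(* If f \<in> I1 \<inter> A, write f \<equiv> a t^m modulo I0; multiplying by t^m gives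
   a t^(2m) \<in> I0, so a = 0 and f \<in> I0. *)
lemma I1_inter_aug: "I1 \<inter> aug \<subseteq> I0"
proof
  fix f assume f: "f \<in> I1 \<inter> aug"
  then obtain a where a: "f - Poly_Mapping.single m a \<in> I0"
    using I1_subset_near unfolding near_def by blast
  have "f * mono_t m \<in> I0" using f aug_colon by blast
  moreover have "(f - Poly_Mapping.single m a) * mono_t m \<in> I0"
    using a ideal_mult[OF ideal0] by (metis mult.commute)
  ultimately have "f * mono_t m - (f - Poly_Mapping.single m a) * mono_t m \<in> I0"
    using ideal_diff[OF ideal0] by blast
  then have "Poly_Mapping.single (m + m) a \<in> I0" by (simp add: left_diff_distrib mult_single)
  then show "f \<in> I0" using a single_in_I0 by fastforce
qed

theorem augmentation: "augmentation_compatible I1 aug \<and> I0 = I1 \<inter> aug"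
proof -
  have eq: "I0 = I1 \<inter> aug" using I0_subset_aug I1_inter_aug subset by blast
  have "augmentation_compatible I1 aug"
    unfolding augmentation_compatible_def eq[symmetric]
  proof (intro conjI exI[of _ residue])
    show "\<forall>q. residue q \<noteq> 0" using residue by blast
  qed (use aug_proper binomial0 in \<open>simp_all add: aug_def\<close>)
  then show ?thesis using eq by blast
qed

end

theorem theorem9p12:
  fixes I :: "nat \<Rightarrow> ('q::comm_monoid_add \<Rightarrow>\<^sub>0 'k::field) set" and l :: nat
  assumes "finitely_generated_monoid TYPE('q)"
    and "\<forall>i\<le>l. binomial_ideal (I i)"
    and "\<forall>i<l. I i \<subset> I (Suc i)"
    and "\<forall>i\<le>l. induced_cong (I i) = induced_cong (I 0)"
  shows "l \<le> 1 \<and>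
    (l = 1 \<longrightarrow> (\<exists>q. mono_t q \<in> I 1) \<and> (\<forall>q. mono_t q \<notin> I 0) \<and>
       (\<exists>A. augmentation_compatible (I 1) A \<and> I 0 = I 1 \<inter> A))"
proof -
  have step: "(\<exists>q. mono_t q \<in> I (Suc i)) \<and> (\<forall>q. mono_t q \<notin> I i)" if "i < l" for i
    using strict_binomial_inclusion[of "I i" "I (Suc i)"] assms(2-4) that
    by (metis Suc_leI less_imp_le)
  have "l \<le> 1"
  proof (rule ccontr)
    assume "\<not> l \<le> 1"
    then show False using step[of 0] step[of 1] by auto
  qed
  moreover have "\<exists>A. augmentation_compatible (I 1) A \<and> I 0 = I 1 \<inter> A" if l: "l = 1"
  proof -
    from step[of 0] l obtain m where "mono_t m \<in> I 1" and "\<forall>q. mono_t q \<notin> I 0" by auto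
    moreover have "binomial_ideal (I 0)" "binomial_ideal (I 1)" using assms(2) l by auto
    moreover have "I 0 \<subseteq> I 1" using assms(3) l by auto
    moreover have "induced_cong (I 0) = induced_cong (I 1)" using assms(4)[rule_format, of 1] l by simp
    ultimately interpret monomial_jump "I 0" "I 1" m by unfold_locales
    show ?thesis using augmentation by blast
  qed
  ultimately show ?thesis using step[of 0] by auto
qed

end
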